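(* Let $f_0, g_0 \in \mathbb{C}[z]$ be polynomials of equal length having nonzero constant coefficients. Let $\sigma_0,\sigma_1,\ldots$ be a sequence of values from $\{-1,1\}$, and define $f_n,g_n$ recursively for all $n \in \mathbb{N}$ by \[ f_{n+1}(z) = f_n(z)+\sigma_n z^{\operatorname{len} f_n} f_n^\dagger(-z), \qquad g_{n+1}(z) = g_n(z)+\sigma_n z^{\operatorname{len} g_n} g_n^\dagger(-z). \] Then for every $n\ge 0$, \begin{multline*} \frac{\|f_n g_n\|_2^2}{\|f_n\|_2^2\|g_n\|_2^2} = \frac{2 \|f_0 g_0\|_2^2+\|f_0 \widetilde{g}_0\|_2^2 + \operatorname{Re} \int f_0 \widetilde{f}_0 \overline{g_0 \widetilde{g}_0}}{3 \|f_0\|_2^2 \|g_0\|_2^2} \\ +\left(-\frac{1}{2}\right)^n \frac{\|f_0 g_0\|_2^2 -\|f_0 \widetilde{g}_0\|_2^2 - \operatorname{Re} \int f_0 \widetilde{f}_0 \overline{g_0 \widetilde{g}_0}}{3 \|f_0\|_2^2 \|g_0\|_2^2}. \end{multline*}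
   Context: For a polynomial $a(z)=a_0+\cdots+a_dz^d$ of degree $d$, $\operatorname{len} a=1+\deg a$ and $a^\dagger(z)=\overline{a_d}+\overline{a_{d-1}}z+\cdots+\overline{a_0}z^d$ (conjugate reciprocal); $f_n^\dagger(-z)$ means $f_n^\dagger$ evaluated at $-z$. For a Laurent polynomial $a(z)=\sum_j a_jz^j$: $\widetilde{a}(z)=a(-z)$, $\overline{a(z)}=\sum_j\overline{a_j}z^{-j}$, $\int a$ is the constant coefficient $a_0=\frac{1}{2\pi}\int_0^{2\pi}a(e^{i\theta})d\theta$, and $\|a\|_p=\left(\frac{1}{2\pi}\int_0^{2\pi}|a(e^{i\theta})|^pd\theta\right)^{1/p}$. *)

theory Defs
  imports "HOL-Analysis.Analysis" "HOL-Computational_Algebra.Polynomial"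
begin

definition plen :: "complex poly \<Rightarrow> nat" where
  "plen a = 1 + degree a"

definition dagger :: "complex poly \<Rightarrow> complex poly" where
  "dagger a = (\<Sum>k\<le>degree a. monom (cnj (coeff a (degree a - k))) k)"

definition tilde :: "complex poly \<Rightarrow> complex poly" where
  "tilde a = pcompose a [:0, -1:]"

primrec rseq :: "(nat \<Rightarrow> int) \<Rightarrow> complex poly \<Rightarrow> nat \<Rightarrow> complex poly" where
  "rseq \<sigma> h0 0 = h0"
| "rseq \<sigma> h0 (Suc n) =
     rseq \<sigma> h0 n + smult (of_int (\<sigma> n))
        (monom 1 (plen (rseq \<sigma> h0 n)) * tilde (dagger (rseq \<sigma> h0 n)))"

text \<open>For a Laurent polynomial this is its constant coefficient; conj of a Laurent
  polynomial on the unit circle is pointwise complex conjugation.\<close>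
definition circ_int :: "(complex \<Rightarrow> complex) \<Rightarrow> complex" where
  "circ_int F = integral {0..2*pi} (\<lambda>\<theta>. F (cis \<theta>)) / complex_of_real (2*pi)"

definition lpnorm :: "real \<Rightarrow> complex poly \<Rightarrow> real" where
  "lpnorm p a = (integral {0..2*pi} (\<lambda>\<theta>. cmod (poly a (cis \<theta>)) powr p) / (2*pi)) powr (1/p)"

end

theory Submission
  imports Defs
begin

text \<open>
  On the unit circle the recursion reads f_(n+1)(z) = f_n(z) + V(z) conj (f_n(-z)), with a factor V
  that is odd, unimodular and, since f_n and g_n keep equal lengths, the same for f and g. Expanding
  the mean values at step n+1, the terms odd in z average to zero, the terms carrying
  conj (V(z))^2 = conj z^(4d+2) vanish for degree reasons, and the rest are mean values of step n.
  Hence ||f_n||^2 doubles at every step, while a = ||f g||^2 and b = ||f g~||^2 + Re (mean of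
  f f~ conj (g g~)) satisfy a' = 2a + 2b and b' = 4a. Dividing the eigenvalues 4 and -2 of this
  system by the growth 4^n of ||f_n||^2 ||g_n||^2 gives the constant term and the factor (-1/2)^n.
\<close>

lemma integrable_on_circle:
  fixes h :: "complex \<Rightarrow> complex"
  assumes "continuous_on UNIV h"
  shows "(\<lambda>\<theta>. h (cis \<theta>)) integrable_on {a..b}"
  by (rule integrable_continuous_interval, rule continuous_on_compose2[OF assms])
     (auto intro: continuous_intros)

lemma continuous_on_reflect:
  "continuous_on UNIV (h :: complex \<Rightarrow> complex) \<Longrightarrow> continuous_on UNIV (\<lambda>z. h (- z))"
  by (rule continuous_on_compose2[of UNIV h]) (auto intro: continuous_intros)

lemma circ_int_add:
  "continuous_on UNIV h \<Longrightarrow> continuous_on UNIV k \<Longrightarrow>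
   circ_int (\<lambda>z. h z + k z) = circ_int h + circ_int k"
  unfolding circ_int_def by (simp add: integral_add integrable_on_circle add_divide_distrib)

lemma circ_int_diff:
  "continuous_on UNIV h \<Longrightarrow> continuous_on UNIV k \<Longrightarrow>
   circ_int (\<lambda>z. h z - k z) = circ_int h - circ_int k"
  unfolding circ_int_def by (simp add: integral_diff integrable_on_circle diff_divide_distrib)

lemma circ_int_mult_left: "circ_int (\<lambda>z. c * h z) = c * circ_int h"
  unfolding circ_int_def by simp

lemma circ_int_cnj: "circ_int (\<lambda>z. cnj (h z)) = cnj (circ_int h)"
  unfolding circ_int_def by (simp add: integral_cnj[symmetric])

lemma circ_int_cong: "(\<And>z. cmod z = 1 \<Longrightarrow> h z = k z) \<Longrightarrow> circ_int h = circ_int k"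
  unfolding circ_int_def by simp

lemma circ_int_reflect:
  fixes h :: "complex \<Rightarrow> complex"
  assumes "continuous_on UNIV h"
  shows "circ_int (\<lambda>z. h (- z)) = circ_int h"
proof -
  define hc where "hc = (\<lambda>t. h (cis t))"
  have int: "hc integrable_on {a..b}" for a b
    unfolding hc_def using integrable_on_circle[OF assms] .
  have "integral {0..2*pi} (\<lambda>\<theta>. h (- cis \<theta>)) = integral {0..2*pi} (hc \<circ> (+) pi)"
  proof (rule integral_cong)
    fix x
    have "cis (pi + x) = - cis x" by (simp add: complex_eq_iff)
    then show "h (- cis x) = (hc \<circ> (+) pi) x" by (simp add: hc_def)
  qed
  also have "\<dots> = integral {pi..3*pi} hc"
    by (simp add: integral_shift_Icc_real)
  also have "\<dots> = integral {pi..2*pi} hc + integral {2*pi..3*pi} hc"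
    using Henstock_Kurzweil_Integration.integral_combine[where a=pi and c="2*pi" and b="3*pi" and f=hc] int
    by simp
  also have "integral {2*pi..3*pi} hc = integral {0..pi} (hc \<circ> (+) (2*pi))"
    by (simp add: integral_shift_Icc_real)
  also have "\<dots> = integral {0..pi} hc"
  proof (rule integral_cong)
    fix x
    have "cis (2*pi + x) = cis x" by (simp add: complex_eq_iff cos_add sin_add)
    then show "(hc \<circ> (+) (2*pi)) x = hc x" by (simp add: hc_def)
  qed
  also have "integral {pi..2*pi} hc + integral {0..pi} hc = integral {0..2*pi} hc"
    using Henstock_Kurzweil_Integration.integral_combine[where a=0 and c=pi and b="2*pi" and f=hc] int
    by (simp add: add.commute)
  finally show ?thesis
    unfolding circ_int_def hc_def by simp
qed

lemma integral_cis_multiple_eq_0: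
  fixes k :: int
  assumes "k \<noteq> 0"
  shows "integral {0..2*pi} (\<lambda>\<theta>. cis (of_int k * \<theta>)) = 0"
proof -
  define F where "F = (\<lambda>\<theta>. cis (of_int k * \<theta>) * inverse (\<i> * of_int k))"
  have "(F has_vector_derivative cis (of_int k * x)) (at x within {0..2*pi})" for x
  proof -
    have "((\<lambda>\<theta>. cis (of_int k * \<theta>)) has_derivative
           (\<lambda>t. (of_int k * t) *\<^sub>R (\<i> * cis (of_int k * x)))) (at x within {0..2*pi})"
      by (intro has_derivative_cis derivative_intros)
    then have "((\<lambda>\<theta>. cis (of_int k * \<theta>) * inverse (\<i> * of_int k)) has_derivative
           (\<lambda>t. (of_int k * t) *\<^sub>R (\<i> * cis (of_int k * x)) * inverse (\<i> * of_int k))) (at x within {0..2*pi})"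
      by (rule has_derivative_mult_left)
    moreover have "(\<lambda>t. (of_int k * t) *\<^sub>R (\<i> * cis (of_int k * x)) * inverse (\<i> * of_int k)) =
                   (\<lambda>t. t *\<^sub>R cis (of_int k * x))"
      using assms by (auto simp: scaleR_conv_of_real field_simps)
    ultimately show ?thesis
      unfolding has_vector_derivative_def F_def by simp
  qed
  then have "((\<lambda>\<theta>. cis (of_int k * \<theta>)) has_integral (F (2*pi) - F 0)) {0..2*pi}"
    by (intro fundamental_theorem_of_calculus) auto
  moreover have "cis (of_int k * (2*pi)) = 1"
    by (metis cis_multiple_2pi Ints_of_int mult.commute)
  ultimately show ?thesis
    by (simp add: F_def integral_unique)
qed

lemma circ_int_poly_mult_cnj_power:
  fixes P :: "complex poly"
  assumes "degree P < m"
  shows "circ_int (\<lambda>z. poly P z * cnj z ^ m) = 0"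
proof -
  have expand: "poly P (cis \<theta>) * cnj (cis \<theta>) ^ m =
      (\<Sum>j\<le>degree P. coeff P j * cis (of_int (int j - int m) * \<theta>))" for \<theta>
  proof -
    have "cis \<theta> ^ j * cnj (cis \<theta>) ^ m = cis (of_int (int j - int m) * \<theta>)" for j
    proof -
      have "cis \<theta> ^ j * cnj (cis \<theta>) ^ m = cis (real j * \<theta>) * cis (- (real m * \<theta>))"
        using Complex.DeMoivre[of \<theta> j] Complex.DeMoivre[of "-\<theta>" m] by (simp add: cis_cnj)
      then show ?thesis by (simp add: cis_mult algebra_simps)
    qed
    then show ?thesis
      by (simp add: poly_altdef sum_distrib_right mult.assoc)
  qed
  have "integral {0..2*pi} (\<lambda>\<theta>. poly P (cis \<theta>) * cnj (cis \<theta>) ^ m) =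
      (\<Sum>j\<le>degree P. coeff P j * integral {0..2*pi} (\<lambda>\<theta>. cis (of_int (int j - int m) * \<theta>)))"
    unfolding expand
    by (subst integral_sum) (auto intro!: integrable_continuous_interval continuous_intros)
  also have "\<dots> = 0"
  proof (intro sum.neutral ballI)
    fix j assume "j \<in> {..degree P}"
    then have "int j - int m \<noteq> 0" using assms by auto
    then show "coeff P j * integral {0..2*pi} (\<lambda>\<theta>. cis (of_int (int j - int m) * \<theta>)) = 0"
      using integral_cis_multiple_eq_0[of "int j - int m"] by simp
  qed
  finally show ?thesis
    unfolding circ_int_def by simp
qed

lemma circ_int_eq_by_even_part:
  fixes h k :: "complex \<Rightarrow> complex"
  assumes "continuous_on UNIV h" and "\<And>z. cmod z = 1 \<Longrightarrow> h z + h (- z) = 2 * k z"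
  shows "circ_int h = circ_int k"
proof -
  have "2 * circ_int h = circ_int (\<lambda>z. h z + h (- z))"
    using assms(1) by (simp add: circ_int_add circ_int_reflect continuous_on_reflect)
  also have "\<dots> = circ_int (\<lambda>z. 2 * k z)"
    using assms(2) by (rule circ_int_cong)
  finally show ?thesis
    by (simp add: circ_int_mult_left)
qed

lemma Re_circ_int_eq_by_real_part:
  fixes h k :: "complex \<Rightarrow> complex"
  assumes "continuous_on UNIV h" and "\<And>z. cmod z = 1 \<Longrightarrow> h z + cnj (h z) = 2 * k z"
  shows "Re (circ_int h) = Re (circ_int k)"
proof -
  have "circ_int h + cnj (circ_int h) = circ_int (\<lambda>z. h z + cnj (h z))"
    using assms(1) by (simp add: circ_int_add circ_int_cnj continuous_on_cnj)
  also have "\<dots> = circ_int (\<lambda>z. 2 * k z)"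
    using assms(2) by (rule circ_int_cong)
  finally have "circ_int h + cnj (circ_int h) = 2 * circ_int k"
    by (simp only: circ_int_mult_left)
  then have "Re (circ_int h + cnj (circ_int h)) = Re (2 * circ_int k)"
    by (rule arg_cong)
  then show ?thesis by simp
qed

context
  fixes V :: "complex \<Rightarrow> complex"
  assumes V_cont: "continuous_on UNIV V"
    and V_odd: "\<And>z. V (- z) = - V z"
    and V_unimodular: "\<And>z. cmod z = 1 \<Longrightarrow> V z * cnj (V z) = 1"
begin

lemma twisted_reflect:
  fixes h h' :: "complex \<Rightarrow> complex"
  assumes "\<And>z. cmod z = 1 \<Longrightarrow> h' z = h z + V z * cnj (h (- z))" and "cmod z = 1"
  shows "h' (- z) = h (- z) - V z * cnj (h z)"
  using assms(1)[of "- z"] assms(2) by (simp add: V_odd)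

lemma circ_int_twisted_norm:
  fixes f f' :: "complex \<Rightarrow> complex"
  assumes "continuous_on UNIV f" and "continuous_on UNIV f'"
    and f'_eq: "\<And>z. cmod z = 1 \<Longrightarrow> f' z = f z + V z * cnj (f (- z))"
  shows "circ_int (\<lambda>z. f' z * cnj (f' z)) = 2 * circ_int (\<lambda>z. f z * cnj (f z))"
proof -
  have "circ_int (\<lambda>z. f' z * cnj (f' z)) = circ_int (\<lambda>z. f z * cnj (f z) + f (- z) * cnj (f (- z)))"
  proof (rule circ_int_eq_by_even_part)
    show "continuous_on UNIV (\<lambda>z. f' z * cnj (f' z))"
      using assms(2) by (intro continuous_intros)
    fix z :: complex
    assume z: "cmod z = 1"
    show "f' z * cnj (f' z) + f' (- z) * cnj (f' (- z)) =
          2 * (f z * cnj (f z) + f (- z) * cnj (f (- z)))"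
      using V_unimodular[OF z]
      by (simp only: f'_eq[OF z] twisted_reflect[OF f'_eq z] complex_cnj_add complex_cnj_diff
          complex_cnj_mult complex_cnj_cnj) algebra
  qed
  also have "\<dots> = 2 * circ_int (\<lambda>z. f z * cnj (f z))"
    using assms(1)
    by (simp add: circ_int_add circ_int_reflect[of "\<lambda>z. f z * cnj (f z)"] continuous_on_reflect
        continuous_intros)
  finally show ?thesis .
qed

context
  fixes f g f' g' :: "complex \<Rightarrow> complex"
  assumes f_cont: "continuous_on UNIV f" and g_cont: "continuous_on UNIV g"
    and f'_cont: "continuous_on UNIV f'" and g'_cont: "continuous_on UNIV g'"
    and f'_eq: "\<And>z. cmod z = 1 \<Longrightarrow> f' z = f z + V z * cnj (f (- z))"
    and g'_eq: "\<And>z. cmod z = 1 \<Longrightarrow> g' z = g z + V z * cnj (g (- z))"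
    and twisted_vanishes: "circ_int (\<lambda>z. f z * f (- z) * g z * g (- z) * cnj (V z) ^ 2) = 0"
begin

lemma twisted_vanishes_cnj:
  "circ_int (\<lambda>z. cnj (f z * f (- z) * g z * g (- z) * cnj (V z) ^ 2)) = 0"
  by (simp only: circ_int_cnj twisted_vanishes complex_cnj_zero)

lemmas twisted_substitutions =
  f'_eq g'_eq twisted_reflect[OF f'_eq] twisted_reflect[OF g'_eq] minus_minus
  complex_cnj_add complex_cnj_diff complex_cnj_mult complex_cnj_power complex_cnj_cnj

lemmas twisted_continuity =
  continuous_on_reflect[OF f_cont] continuous_on_reflect[OF g_cont] f_cont g_cont V_cont

lemma circ_int_twisted_product:
  "circ_int (\<lambda>z. f' z * g' z * cnj (f' z * g' z)) =
     2 * circ_int (\<lambda>z. f z * g z * cnj (f z * g z))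
   + 2 * circ_int (\<lambda>z. f z * g (- z) * cnj (f z * g (- z)))
   + circ_int (\<lambda>z. f z * f (- z) * cnj (g z * g (- z)))
   + cnj (circ_int (\<lambda>z. f z * f (- z) * cnj (g z * g (- z))))"
proof -
  define a where "a = (\<lambda>z. f z * g z * cnj (f z * g z))"
  define b where "b = (\<lambda>z. f z * g (- z) * cnj (f z * g (- z)))"
  define c where "c = (\<lambda>z. f z * f (- z) * cnj (g z * g (- z)))"
  define k where "k = (\<lambda>z. f z * f (- z) * g z * g (- z) * cnj (V z) ^ 2)"
  have "circ_int (\<lambda>z. f' z * g' z * cnj (f' z * g' z)) =
        circ_int (\<lambda>z. a z + a (- z) + b z + b (- z) + c z + cnj (c z) + k z + cnj (k z))"
  proof (rule circ_int_eq_by_even_part)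
    show "continuous_on UNIV (\<lambda>z. f' z * g' z * cnj (f' z * g' z))"
      using f'_cont g'_cont by (intro continuous_intros)
    fix z :: complex
    assume z: "cmod z = 1"
    show "f' z * g' z * cnj (f' z * g' z) + f' (- z) * g' (- z) * cnj (f' (- z) * g' (- z)) =
          2 * (a z + a (- z) + b z + b (- z) + c z + cnj (c z) + k z + cnj (k z))"
      unfolding a_def b_def c_def k_def using V_unimodular[OF z]
      by (simp only: twisted_substitutions z) algebra
  qed
  also have "\<dots> = 2 * circ_int a + 2 * circ_int b + circ_int c + cnj (circ_int c)"
  proof -
    have cont: "continuous_on UNIV a" "continuous_on UNIV b" "continuous_on UNIV c" "continuous_on UNIV k"
      unfolding a_def b_def c_def k_def by (intro continuous_intros twisted_continuity)+
    show ?thesis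
      using twisted_vanishes twisted_vanishes_cnj
      by (simp add: circ_int_add circ_int_cnj circ_int_reflect cont continuous_on_reflect
          continuous_intros flip: k_def)
  qed
  finally show ?thesis
    unfolding a_def b_def c_def .
qed

lemma circ_int_twisted_product_reflect:
  "circ_int (\<lambda>z. f' z * g' (- z) * cnj (f' z * g' (- z))) =
     2 * circ_int (\<lambda>z. f z * g z * cnj (f z * g z))
   + 2 * circ_int (\<lambda>z. f z * g (- z) * cnj (f z * g (- z)))
   - circ_int (\<lambda>z. f z * f (- z) * cnj (g z * g (- z)))
   - cnj (circ_int (\<lambda>z. f z * f (- z) * cnj (g z * g (- z))))"
proof -
  define a where "a = (\<lambda>z. f z * g z * cnj (f z * g z))"
  define b where "b = (\<lambda>z. f z * g (- z) * cnj (f z * g (- z)))"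
  define c where "c = (\<lambda>z. f z * f (- z) * cnj (g z * g (- z)))"
  define k where "k = (\<lambda>z. f z * f (- z) * g z * g (- z) * cnj (V z) ^ 2)"
  have "circ_int (\<lambda>z. f' z * g' (- z) * cnj (f' z * g' (- z))) =
        circ_int (\<lambda>z. a z + a (- z) + b z + b (- z) - c z - cnj (c z) - k z - cnj (k z))"
  proof (rule circ_int_eq_by_even_part)
    show "continuous_on UNIV (\<lambda>z. f' z * g' (- z) * cnj (f' z * g' (- z)))"
      by (intro continuous_intros f'_cont continuous_on_reflect[OF g'_cont])
    fix z :: complex
    assume z: "cmod z = 1"
    show "f' z * g' (- z) * cnj (f' z * g' (- z)) + f' (- z) * g' (- (- z)) * cnj (f' (- z) * g' (- (- z))) =
          2 * (a z + a (- z) + b z + b (- z) - c z - cnj (c z) - k z - cnj (k z))"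
      unfolding a_def b_def c_def k_def using V_unimodular[OF z]
      by (simp only: twisted_substitutions z) algebra
  qed
  also have "\<dots> = 2 * circ_int a + 2 * circ_int b - circ_int c - cnj (circ_int c)"
  proof -
    have cont: "continuous_on UNIV a" "continuous_on UNIV b" "continuous_on UNIV c" "continuous_on UNIV k"
      unfolding a_def b_def c_def k_def by (intro continuous_intros twisted_continuity)+
    show ?thesis
      using twisted_vanishes twisted_vanishes_cnj
      by (simp add: circ_int_add circ_int_diff circ_int_cnj circ_int_reflect cont
          continuous_on_reflect continuous_intros flip: k_def)
  qed
  finally show ?thesis
    unfolding a_def b_def c_def .
qed

text \<open>Only the real part is determined: the remaining terms are purely imaginary.\<close>
lemma Re_circ_int_twisted_cross:
  "Re (circ_int (\<lambda>z. f' z * f' (- z) * cnj (g' z * g' (- z)))) =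
   Re (2 * circ_int (\<lambda>z. f z * g z * cnj (f z * g z))
     - 2 * circ_int (\<lambda>z. f z * g (- z) * cnj (f z * g (- z)))
     + circ_int (\<lambda>z. f z * f (- z) * cnj (g z * g (- z)))
     + cnj (circ_int (\<lambda>z. f z * f (- z) * cnj (g z * g (- z)))))"
proof -
  define a where "a = (\<lambda>z. f z * g z * cnj (f z * g z))"
  define b where "b = (\<lambda>z. f z * g (- z) * cnj (f z * g (- z)))"
  define c where "c = (\<lambda>z. f z * f (- z) * cnj (g z * g (- z)))"
  define k where "k = (\<lambda>z. f z * f (- z) * g z * g (- z) * cnj (V z) ^ 2)"
  have "Re (circ_int (\<lambda>z. f' z * f' (- z) * cnj (g' z * g' (- z)))) =
        Re (circ_int (\<lambda>z. a z + a (- z) - b z - b (- z) + c z + cnj (c z) - k z - cnj (k z)))"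
  proof (rule Re_circ_int_eq_by_real_part)
    show "continuous_on UNIV (\<lambda>z. f' z * f' (- z) * cnj (g' z * g' (- z)))"
      by (intro continuous_intros f'_cont g'_cont continuous_on_reflect[OF f'_cont]
          continuous_on_reflect[OF g'_cont])
    fix z :: complex
    assume z: "cmod z = 1"
    show "f' z * f' (- z) * cnj (g' z * g' (- z)) + cnj (f' z * f' (- z) * cnj (g' z * g' (- z))) =
          2 * (a z + a (- z) - b z - b (- z) + c z + cnj (c z) - k z - cnj (k z))"
      unfolding a_def b_def c_def k_def using V_unimodular[OF z]
      by (simp only: twisted_substitutions z) algebra
  qed
  also have "\<dots> = Re (2 * circ_int a - 2 * circ_int b + circ_int c + cnj (circ_int c))"
  proof -
    have cont: "continuous_on UNIV a" "continuous_on UNIV b" "continuous_on UNIV c" "continuous_on UNIV k"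
      unfolding a_def b_def c_def k_def by (intro continuous_intros twisted_continuity)+
    show ?thesis
      using twisted_vanishes twisted_vanishes_cnj
      by (simp add: circ_int_add circ_int_diff circ_int_cnj circ_int_reflect cont
          continuous_on_reflect continuous_intros flip: k_def)
  qed
  finally show ?thesis
    unfolding a_def b_def c_def .
qed

end

end

lemma poly_tilde [simp]: "poly (tilde p) z = poly p (- z)"
  by (simp add: tilde_def poly_pcompose)

lemma degree_tilde [simp]: "degree (tilde p) = degree p"
  by (simp add: tilde_def degree_pcompose)

lemma tilde_eq_0_iff [simp]: "tilde p = 0 \<longleftrightarrow> p = 0"
  by (simp add: tilde_def pcompose_eq_0_iff)

lemma coeff_dagger:
  "coeff (dagger p) k = (if k \<le> degree p then cnj (coeff p (degree p - k)) else 0)"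
  by (simp add: dagger_def coeff_sum coeff_monom)

lemma degree_dagger:
  assumes "coeff p 0 \<noteq> 0"
  shows "degree (dagger p) = degree p"
proof (rule antisym)
  show "degree (dagger p) \<le> degree p"
    by (rule degree_le) (simp add: coeff_dagger)
  show "degree p \<le> degree (dagger p)"
    by (rule le_degree) (simp add: coeff_dagger assms)
qed

lemma dagger_nonzero:
  assumes "coeff p 0 \<noteq> 0"
  shows "dagger p \<noteq> 0"
  using assms by (metis coeff_dagger coeff_0 diff_self_eq_0 complex_cnj_zero_iff order_refl)

lemma poly_dagger:
  assumes "cmod w = 1"
  shows "poly (dagger p) w = w ^ degree p * cnj (poly p w)"
proof -
  define d where "d = degree p"
  have unit: "w * cnj w = 1"
    using complex_norm_square[of w] assms by simp
  have "poly (dagger p) w = (\<Sum>k\<le>d. cnj (coeff p (d - k)) * w ^ k)"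
    by (simp add: dagger_def poly_sum poly_monom d_def)
  also have "\<dots> = (\<Sum>i\<le>d. cnj (coeff p i) * w ^ (d - i))"
    using sum.atLeastAtMost_rev[of "\<lambda>k. cnj (coeff p (d - k)) * w ^ k" 0 d]
    by (simp add: atLeast0AtMost)
  also have "\<dots> = (\<Sum>i\<le>d. cnj (coeff p i) * (w ^ d * cnj w ^ i))"
  proof (rule sum.cong[OF refl])
    fix i assume "i \<in> {..d}"
    then have "w ^ d * cnj w ^ i = w ^ (d - i) * (w * cnj w) ^ i"
      by (simp add: power_mult_distrib flip: power_add)
    then show "cnj (coeff p i) * w ^ (d - i) = cnj (coeff p i) * (w ^ d * cnj w ^ i)"
      using unit by simp
  qed
  also have "\<dots> = w ^ d * cnj (poly p w)"
    by (simp add: poly_altdef d_def sum_distrib_left mult_ac)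
  finally show ?thesis
    by (simp add: d_def)
qed

lemma degree_add_reflection:
  fixes s :: int
  assumes "coeff p 0 \<noteq> 0" and "s \<noteq> 0"
  shows "degree (p + smult (of_int s) (monom 1 (plen p) * tilde (dagger p))) = 2 * degree p + 1"
proof -
  have "degree (smult (of_int s) (monom (1::complex) (plen p) * tilde (dagger p))) = 2 * degree p + 1"
    using assms by (simp add: degree_mult_eq degree_monom_eq dagger_nonzero degree_dagger plen_def)
  then show ?thesis
    by (subst degree_add_eq_right) auto
qed

lemma coeff_rseq_0: "coeff (rseq \<sigma> h n) 0 = coeff h 0"
  by (induction n) (simp_all add: coeff_monom_mult plen_def)

lemma plen_rseq:
  assumes "coeff h 0 \<noteq> 0" and "\<And>k. \<sigma> k \<noteq> 0"
  shows "plen (rseq \<sigma> h n) = 2 ^ n * plen h"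
proof (induction n)
  case (Suc n)
  have "coeff (rseq \<sigma> h n) 0 \<noteq> 0"
    using assms(1) by (simp add: coeff_rseq_0)
  from degree_add_reflection[OF this assms(2)[of n]] show ?case
    using Suc by (simp add: plen_def)
qed simp

text \<open>By \<open>poly_dagger\<close> at \<open>-z\<close>, one step of the recursion maps \<open>p(z)\<close> to
  \<open>p(z) + twist \<sigma> (degree p) z * cnj (p(-z))\<close> on the unit circle.\<close>
definition twist :: "int \<Rightarrow> nat \<Rightarrow> complex \<Rightarrow> complex" where
  "twist s d z = of_int s * z ^ Suc d * (- z) ^ d"

lemma poly_rseq_Suc:
  assumes "cmod z = 1"
  shows "poly (rseq \<sigma> h (Suc n)) z =
         poly (rseq \<sigma> h n) z + twist (\<sigma> n) (degree (rseq \<sigma> h n)) z * cnj (poly (rseq \<sigma> h n) (- z))"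
  using assms by (simp add: poly_dagger poly_monom twist_def plen_def)

lemma continuous_on_twist: "continuous_on UNIV (twist s d)"
  unfolding twist_def by (intro continuous_intros)

lemma twist_minus: "twist s d (- z) = - twist s d z"
  by (simp add: twist_def)

lemma twist_mult_cnj:
  assumes "s \<in> {-1, 1}" and "cmod z = 1"
  shows "twist s d z * cnj (twist s d z) = 1"
proof -
  have "cmod (twist s d z) = 1"
    using assms by (auto simp: twist_def norm_mult norm_power)
  then show ?thesis
    using complex_norm_square[of "twist s d z"] by simp
qed

lemma cnj_twist_squared:
  assumes "s \<in> {-1, 1}"
  shows "cnj (twist s d z) ^ 2 = cnj z ^ (4 * d + 2)"
proof -
  have "(- z) ^ d * (- z) ^ d = z ^ d * z ^ d"
    by (simp flip: power_mult_distrib)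
  then have "twist s d z ^ 2 = of_int (s ^ 2) * z ^ (4 * d + 2)"
    by (simp add: twist_def power2_eq_square power_add algebra_simps numeral_eq_Suc)
  also have "of_int (s ^ 2) = (1 :: complex)"
    using assms by auto
  finally show ?thesis
    by (metis complex_cnj_power mult_1)
qed

lemma circ_int_twisted_product_vanishes:
  fixes P Q :: "complex poly"
  assumes "degree P \<le> d" and "degree Q \<le> d" and "s \<in> {-1, 1}"
  shows "circ_int (\<lambda>z. poly P z * poly P (- z) * poly Q z * poly Q (- z) * cnj (twist s d z) ^ 2) = 0"
proof -
  have "degree (P * tilde P * Q * tilde Q) \<le> degree P + degree (tilde P) + degree Q + degree (tilde Q)"
    by (meson add_le_mono degree_mult_le order_refl order_trans)
  then have "degree (P * tilde P * Q * tilde Q) < 4 * d + 2"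
    using assms(1,2) by simp
  then have "circ_int (\<lambda>z. poly (P * tilde P * Q * tilde Q) z * cnj z ^ (4 * d + 2)) = 0"
    by (rule circ_int_poly_mult_cnj_power)
  then show ?thesis
    by (simp add: cnj_twist_squared[OF assms(3)])
qed

lemma lpnorm_2_squared: "(lpnorm 2 P)\<^sup>2 = Re (circ_int (\<lambda>z. poly P z * cnj (poly P z)))"
proof -
  define r where "r = (\<lambda>\<theta>. (cmod (poly P (cis \<theta>)))\<^sup>2)"
  have r_int: "r integrable_on {0..2*pi}"
    unfolding r_def by (intro integrable_continuous_interval continuous_intros)
  define I where "I = integral {0..2*pi} r"
  have "0 \<le> I"
    unfolding I_def by (rule integral_nonneg[OF r_int]) (simp add: r_def)
  then have "(lpnorm 2 P)\<^sup>2 = I / (2*pi)"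
    by (simp add: lpnorm_def I_def r_def powr_half_sqrt)
  moreover have "integral {0..2*pi} (\<lambda>\<theta>. poly P (cis \<theta>) * cnj (poly P (cis \<theta>))) =
                 integral {0..2*pi} (\<lambda>\<theta>. complex_of_real (r \<theta>))"
    by (simp only: r_def complex_norm_square)
  moreover have "\<dots> = complex_of_real I"
    unfolding I_def by (rule integral_unique[OF has_integral_of_real[OF integrable_integral[OF r_int]]])
  ultimately show ?thesis
    by (simp add: circ_int_def Re_divide_of_real)
qed

definition reflected_correlation :: "complex poly \<Rightarrow> complex poly \<Rightarrow> real" where
  "reflected_correlation P Q = Re (circ_int (\<lambda>z. poly (P * tilde P) z * cnj (poly (Q * tilde Q) z)))"

lemma lpnorm_twisted_step:
  fixes P P' :: "complex poly"
  assumes "s \<in> {-1, 1}"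
    and "\<And>z. cmod z = 1 \<Longrightarrow> poly P' z = poly P z + twist s d z * cnj (poly P (- z))"
  shows "(lpnorm 2 P')\<^sup>2 = 2 * (lpnorm 2 P)\<^sup>2"
proof -
  have cont: "continuous_on UNIV (poly R)" for R :: "complex poly"
    by (intro continuous_intros)
  have "circ_int (\<lambda>z. poly P' z * cnj (poly P' z)) = 2 * circ_int (\<lambda>z. poly P z * cnj (poly P z))"
    by (rule circ_int_twisted_norm[OF continuous_on_twist twist_minus twist_mult_cnj[OF assms(1)]
          cont cont assms(2)])
  then show ?thesis
    unfolding lpnorm_2_squared by simp
qed

lemma lpnorm_twisted_pair:
  fixes P Q P' Q' :: "complex poly"
  assumes "degree P \<le> d" and "degree Q \<le> d" and "s \<in> {-1, 1}"
    and "\<And>z. cmod z = 1 \<Longrightarrow> poly P' z = poly P z + twist s d z * cnj (poly P (- z))"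
    and "\<And>z. cmod z = 1 \<Longrightarrow> poly Q' z = poly Q z + twist s d z * cnj (poly Q (- z))"
  shows "(lpnorm 2 (P' * Q'))\<^sup>2 =
           2 * (lpnorm 2 (P * Q))\<^sup>2 + 2 * (lpnorm 2 (P * tilde Q))\<^sup>2 + 2 * reflected_correlation P Q"
    and "(lpnorm 2 (P' * tilde Q'))\<^sup>2 + reflected_correlation P' Q' = 4 * (lpnorm 2 (P * Q))\<^sup>2"
proof -
  have cont: "continuous_on UNIV (poly R)" for R :: "complex poly"
    by (intro continuous_intros)
  note twisted = continuous_on_twist twist_minus twist_mult_cnj[OF assms(3)] cont cont cont cont
    assms(4,5) circ_int_twisted_product_vanishes[OF assms(1-3)]
  show "(lpnorm 2 (P' * Q'))\<^sup>2 =
          2 * (lpnorm 2 (P * Q))\<^sup>2 + 2 * (lpnorm 2 (P * tilde Q))\<^sup>2 + 2 * reflected_correlation P Q"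
    using circ_int_twisted_product[OF twisted]
    by (simp add: lpnorm_2_squared reflected_correlation_def)
  show "(lpnorm 2 (P' * tilde Q'))\<^sup>2 + reflected_correlation P' Q' = 4 * (lpnorm 2 (P * Q))\<^sup>2"
    using circ_int_twisted_product_reflect[OF twisted] Re_circ_int_twisted_cross[OF twisted]
    by (simp add: lpnorm_2_squared reflected_correlation_def)
qed

lemma lpnorm_rseq:
  assumes "\<And>k. \<sigma> k \<in> {-1, 1}"
  shows "(lpnorm 2 (rseq \<sigma> h n))\<^sup>2 = 2 ^ n * (lpnorm 2 h)\<^sup>2"
proof (induction n)
  case (Suc n)
  have "(lpnorm 2 (rseq \<sigma> h (Suc n)))\<^sup>2 = 2 * (lpnorm 2 (rseq \<sigma> h n))\<^sup>2"
    by (rule lpnorm_twisted_step[OF assms[of n] poly_rseq_Suc[of _ \<sigma> h n]])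
  with Suc.IH show ?case
    by (simp del: rseq.simps)
qed simp

lemma rseq_product_recurrences:
  assumes "degree (rseq \<sigma> f n) = degree (rseq \<sigma> g n)" and "\<sigma> n \<in> {-1, 1}"
  defines "F \<equiv> rseq \<sigma> f" and "G \<equiv> rseq \<sigma> g"
  shows "(lpnorm 2 (F (Suc n) * G (Suc n)))\<^sup>2 =
           2 * (lpnorm 2 (F n * G n))\<^sup>2 + 2 * ((lpnorm 2 (F n * tilde (G n)))\<^sup>2 + reflected_correlation (F n) (G n))"
    and "(lpnorm 2 (F (Suc n) * tilde (G (Suc n))))\<^sup>2 + reflected_correlation (F (Suc n)) (G (Suc n)) =
           4 * (lpnorm 2 (F n * G n))\<^sup>2"
  unfolding F_def G_def
  using lpnorm_twisted_pair[OF order_refl eq_imp_le[OF assms(1)[symmetric]] assms(2)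
      poly_rseq_Suc[of _ \<sigma> f n] poly_rseq_Suc[of _ \<sigma> g n, folded assms(1)]]
  by (simp_all del: rseq.simps add: distrib_left)

lemma coupled_recurrence_closed_form:
  fixes a b :: "nat \<Rightarrow> real"
  assumes "\<And>k. a (Suc k) = 2 * a k + 2 * b k" and "\<And>k. b (Suc k) = 4 * a k"
  shows "a n = (4 ^ n * (2 * a 0 + b 0) + (-2) ^ n * (a 0 - b 0)) / 3"
proof -
  have "2 * a n + b n = 4 ^ n * (2 * a 0 + b 0) \<and> a n - b n = (-2) ^ n * (a 0 - b 0)"
    by (induction n) (simp_all add: assms algebra_simps)
  then show ?thesis
    by simp
qed

theorem theorem2p4:
  fixes f0 g0 :: "complex poly" and \<sigma> :: "nat \<Rightarrow> int" and n :: nat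
  assumes "plen f0 = plen g0"
    and "coeff f0 0 \<noteq> 0" and "coeff g0 0 \<noteq> 0"
    and "\<And>k. \<sigma> k \<in> {-1, 1}"
  shows "(lpnorm 2 (rseq \<sigma> f0 n * rseq \<sigma> g0 n))\<^sup>2
           / ((lpnorm 2 (rseq \<sigma> f0 n))\<^sup>2 * (lpnorm 2 (rseq \<sigma> g0 n))\<^sup>2)
         = (2 * (lpnorm 2 (f0 * g0))\<^sup>2 + (lpnorm 2 (f0 * tilde g0))\<^sup>2
              + Re (circ_int (\<lambda>z. poly (f0 * tilde f0) z * cnj (poly (g0 * tilde g0) z))))
             / (3 * (lpnorm 2 f0)\<^sup>2 * (lpnorm 2 g0)\<^sup>2)
           + (- 1 / 2) ^ n *
             (((lpnorm 2 (f0 * g0))\<^sup>2 - (lpnorm 2 (f0 * tilde g0))\<^sup>2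
              - Re (circ_int (\<lambda>z. poly (f0 * tilde f0) z * cnj (poly (g0 * tilde g0) z))))
             / (3 * (lpnorm 2 f0)\<^sup>2 * (lpnorm 2 g0)\<^sup>2))"
proof -
  define F where "F = rseq \<sigma> f0"
  define G where "G = rseq \<sigma> g0"
  define A where "A k = (lpnorm 2 (F k * G k))\<^sup>2" for k
  define B where "B k = (lpnorm 2 (F k * tilde (G k)))\<^sup>2 + reflected_correlation (F k) (G k)" for k
  define N where "N = (lpnorm 2 f0)\<^sup>2 * (lpnorm 2 g0)\<^sup>2"
  have "\<sigma> k \<noteq> 0" for k
    using assms(4)[of k] by auto
  then have "plen (F k) = plen (G k)" for k
    using plen_rseq[OF assms(2)] plen_rseq[OF assms(3)] assms(1) unfolding F_def G_def by metis
  then have degree_eq: "degree (rseq \<sigma> f0 k) = degree (rseq \<sigma> g0 k)" for k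
    by (simp add: F_def G_def plen_def)
  have "A (Suc k) = 2 * A k + 2 * B k" and "B (Suc k) = 4 * A k" for k
    using rseq_product_recurrences[OF degree_eq assms(4)[of k]]
    unfolding A_def B_def F_def G_def by (simp_all del: rseq.simps)
  then have closed_form: "A n = (4 ^ n * (2 * A 0 + B 0) + (-2) ^ n * (A 0 - B 0)) / 3"
    by (rule coupled_recurrence_closed_form)
  have norms: "(lpnorm 2 (F n))\<^sup>2 * (lpnorm 2 (G n))\<^sup>2 = 4 ^ n * N"
    using lpnorm_rseq[of \<sigma>, OF assms(4)]
    by (simp add: F_def G_def N_def mult_ac flip: power_mult_distrib)
  have ratio: "(4 ^ n * x + (-2) ^ n * y) / 3 / (4 ^ n * N) = x / (3 * N) + (- 1 / 2) ^ n * (y / (3 * N))"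
    for x y :: real
  proof -
    have "(- 1 / 2 :: real) ^ n = (- 2) ^ n / 4 ^ n"
      by (simp flip: power_divide)
    then show ?thesis
      by (cases "N = 0") (simp_all add: field_simps)
  qed
  have "A n / ((lpnorm 2 (F n))\<^sup>2 * (lpnorm 2 (G n))\<^sup>2) =
        (2 * A 0 + B 0) / (3 * N) + (- 1 / 2) ^ n * ((A 0 - B 0) / (3 * N))"
    unfolding closed_form norms by (rule ratio)
  then show ?thesis
    unfolding A_def B_def N_def F_def G_def reflected_correlation_def
    by (simp only: rseq.simps(1) mult.assoc add.assoc diff_diff_eq)
qed

end
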